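(* Consider the networked system $\Sigma$ with $u\equiv 0$, i.e. $\dot x=(I_{\bar n}\otimes A-L\otimes BC)x$, $x=(x_1,\dots,x_{\bar n})$, $x_i\in\mathbb{R}^n$, and suppose Assumption A holds. Then every solution satisfies $\lim_{t\to\infty}(x_i(t)-x_j(t))=0$ for all $i,j\in\{1,\dots,\bar n\}$.
   Context: Subsystem data: $Q=Q^\top\succ0$, $J=-J^\top$, $R=R^\top\succeq0$ in $\mathbb{R}^{n\times n}$, $B\in\mathbb{R}^{n\times m}$, $A=(J-R)Q$, $C=B^\top Q$, and $(A,B,C)$ is a minimal realization ($(A,B)$ controllable, $(C,A)$ observable). Weights $w_{ij}\ge0$ ($i\neq j\in\{1,\dots,\bar n\}$, $\bar n\ge2$); $L_{ij}=-w_{ij}$ for $i\ne j$, $L_{ii}=\sum_{j\ne i}w_{ij}$. The networked system is $\Sigma$: $\dot x=(I\otimes A-L\otimes BC)x+(G\otimes B)u$, $y=(H\otimes C)x$ with $G\in\mathbb{R}^{\bar n\times\bar m}$, $H\in\mathbb{R}^{\bar p\times\bar n}$; $\otimes$ is the Kronecker product. The directed graph $\mathcal G$ on $\{1,\dots,\bar n\}$ has an arc $(i,j)$ iff $w_{ji}>0$; the underlying undirected graph $\mathcal G_u$ has an edge between $i$ and $j$ iff $w_{ij}+w_{ji}>0$. A directed rooted spanning tree is a subgraph of $\mathcal G$ that is a directed tree containing all vertices in which every vertex except one root has exactly one incoming arc. Assumption A: (i) $\mathcal G_u$ is a tree; (ii) $\mathcal G$ contains a directed rooted spanning tree as a subgraph.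 *)

theory Defs
  imports "HOL-Analysis.Analysis"
begin

fun mpow :: "real^'n^'n \<Rightarrow> nat \<Rightarrow> real^'n^'n" where
  "mpow A 0 = mat 1"
| "mpow A (Suc k) = A ** mpow A k"

definition symmetric_mat :: "real^'n^'n \<Rightarrow> bool" where
  "symmetric_mat M \<longleftrightarrow> transpose M = M"

definition pos_def :: "real^'n^'n \<Rightarrow> bool" where
  "pos_def M \<longleftrightarrow> symmetric_mat M \<and> (\<forall>v. v \<noteq> 0 \<longrightarrow> v \<bullet> (M *v v) > 0)"

definition pos_semidef :: "real^'n^'n \<Rightarrow> bool" where
  "pos_semidef M \<longleftrightarrow> symmetric_mat M \<and> (\<forall>v. v \<bullet> (M *v v) \<ge> 0)"

definition skew_symmetric :: "real^'n^'n \<Rightarrow> bool" where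
  "skew_symmetric M \<longleftrightarrow> transpose M = - M"

definition controllable :: "real^'n^'n \<Rightarrow> real^'m^'n \<Rightarrow> bool" where
  "controllable A B \<longleftrightarrow>
     span {(mpow A k ** B) *v e | k e. k < CARD('n) \<and> e \<in> (UNIV :: (real^'m) set)} = UNIV"

definition observable :: "real^'n^'p \<Rightarrow> real^'n^'n \<Rightarrow> bool" where
  "observable C A \<longleftrightarrow> (\<forall>v. (\<forall>k < CARD('n). (C ** mpow A k) *v v = 0) \<longrightarrow> v = 0)"

definition uadj :: "('k \<Rightarrow> 'k \<Rightarrow> bool) \<Rightarrow> 'k \<Rightarrow> 'k \<Rightarrow> bool" where
  "uadj E a b \<longleftrightarrow> a \<noteq> b \<and> (E a b \<or> E b a)"

definition graph_connected :: "('k \<Rightarrow> 'k \<Rightarrow> bool) \<Rightarrow> bool" where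
  "graph_connected E \<longleftrightarrow> (\<forall>u v. (uadj E)\<^sup>*\<^sup>* u v)"

definition has_cycle :: "('k \<Rightarrow> 'k \<Rightarrow> bool) \<Rightarrow> bool" where
  "has_cycle E \<longleftrightarrow> (\<exists>vs. length vs \<ge> 3 \<and> distinct vs \<and>
       (\<forall>i < length vs - 1. uadj E (vs ! i) (vs ! Suc i)) \<and> uadj E (last vs) (hd vs))"

definition is_tree :: "('k \<Rightarrow> 'k \<Rightarrow> bool) \<Rightarrow> bool" where
  "is_tree E \<longleftrightarrow> graph_connected E \<and> \<not> has_cycle E"

definition arc :: "('k \<Rightarrow> 'k \<Rightarrow> real) \<Rightarrow> 'k \<Rightarrow> 'k \<Rightarrow> bool" where
  "arc w i j \<longleftrightarrow> i \<noteq> j \<and> w j i > 0"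

definition uedge :: "('k \<Rightarrow> 'k \<Rightarrow> real) \<Rightarrow> 'k \<Rightarrow> 'k \<Rightarrow> bool" where
  "uedge w i j \<longleftrightarrow> i \<noteq> j \<and> w i j + w j i > 0"

definition has_rooted_spanning_tree :: "('k \<Rightarrow> 'k \<Rightarrow> real) \<Rightarrow> bool" where
  "has_rooted_spanning_tree w \<longleftrightarrow> (\<exists>T r.
      (\<forall>i j. T i j \<longrightarrow> arc w i j) \<and> is_tree T \<and>
      (\<forall>i. \<not> T i r) \<and> (\<forall>v. v \<noteq> r \<longrightarrow> (\<exists>!i. T i v)))"

definition laplacian :: "('k::finite \<Rightarrow> 'k \<Rightarrow> real) \<Rightarrow> 'k \<Rightarrow> 'k \<Rightarrow> real" where
  "laplacian w i j = (if i = j then (\<Sum>l \<in> UNIV - {i}. w i l) else - w i j)"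

text \<open>Kronecker product of a k\<times>k matrix M and an n\<times>n matrix N acting on the stacked
  vector x = (x_1,...,x_nbar), written blockwise: ((M \<otimes> N) x)_i = \<Sum>_j M i j * N x_j.\<close>
definition kron_apply :: "('k::finite \<Rightarrow> 'k \<Rightarrow> real) \<Rightarrow> real^'n^'n \<Rightarrow> real^'n^'k \<Rightarrow> real^'n^'k" where
  "kron_apply M N x = (\<chi> i. \<Sum>j\<in>UNIV. M i j *\<^sub>R (N *v (x $ j)))"

definition network_rhs :: "('k::finite \<Rightarrow> 'k \<Rightarrow> real) \<Rightarrow> real^'n^'n \<Rightarrow> real^'n^'n \<Rightarrow> real^'n^'k \<Rightarrow> real^'n^'k" where
  "network_rhs L A BC x =
     kron_apply (\<lambda>i j. if i = j then 1 else 0) A x - kron_apply L BC x"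

end

theory Submission
  imports Defs
begin

text \<open>Since the graph underlying the network is a tree, every nonzero coupling weight sits on an
  edge between a vertex and its parent in the rooted spanning tree. Choosing vertex weights g down
  the tree so that each such edge is balanced up to a positive slack makes the weighted Laplacian
  form coercive on the subspace annihilated by the left null vector \<pi> of L. With z the deviation
  of x from its \<pi>-weighted mean, passivity of the port-Hamiltonian agents then makes
  V(z) = sum_i g_i z_i' Q z_i a Lyapunov function with V' \<le> -c |(I \<otimes> C) z|^2. Barbalat's lemma
  gives (I \<otimes> C) z \<rightarrow> 0; differentiating along the flow and applying Barbalat again, every
  observation (I \<otimes> C) M^k z (M the network matrix) tends to 0, and observability of (C, A) turns this into z \<rightarrow> 0.\<close>

section \<open>Quadratic forms, Barbalat's lemma and linear flows\<close>

lemma quadratic_form_lower_bound: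
  fixes q :: "'a::euclidean_space \<Rightarrow> real"
  assumes cont: "continuous_on UNIV q"
    and hom: "\<And>x s. q (s *\<^sub>R x) = s\<^sup>2 * q x"
    and pos: "\<And>x. x \<noteq> 0 \<Longrightarrow> q x > 0"
  obtains \<mu> where "\<mu> > 0" "\<And>x. \<mu> * (norm x)\<^sup>2 \<le> q x"
proof -
  obtain e :: 'a where "e \<in> Basis" using nonempty_Basis by blast
  then have "sphere (0::'a) 1 \<noteq> {}" by (auto intro!: exI[of _ e])
  then obtain x0 where x0: "x0 \<in> sphere 0 1" and min: "\<And>y. y \<in> sphere 0 1 \<Longrightarrow> q x0 \<le> q y"
    using continuous_attains_inf[OF compact_sphere _ continuous_on_subset[OF cont]] by blast
  have "q x0 * (norm x)\<^sup>2 \<le> q x" for x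
  proof (cases "x = 0")
    case True
    then show ?thesis using hom[of 0 x] by simp
  next
    case False
    define u where "u = (1 / norm x) *\<^sub>R x"
    have "u \<in> sphere 0 1" "x = norm x *\<^sub>R u" using False by (auto simp: u_def)
    then have "q x = (norm x)\<^sup>2 * q u" using hom[of "norm x" u] by simp
    then show ?thesis
      using mult_right_mono[OF min[OF \<open>u \<in> sphere 0 1\<close>], of "(norm x)\<^sup>2"] by (simp add: mult.commute)
  qed
  moreover have "x0 \<noteq> 0" using x0 by auto
  then have "q x0 > 0" by (rule pos)
  ultimately show ?thesis using that by blast
qed

lemma abs_norm_power2_diff_le:
  "\<bar>(norm a)\<^sup>2 - (norm b)\<^sup>2\<bar> \<le> norm (a - b) * (norm a + norm b)"
proof -
  have "(norm a)\<^sup>2 - (norm b)\<^sup>2 = (norm a - norm b) * (norm a + norm b)"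
    by (simp add: power2_eq_square algebra_simps)
  then have "\<bar>(norm a)\<^sup>2 - (norm b)\<^sup>2\<bar> = \<bar>norm a - norm b\<bar> * (norm a + norm b)"
    by (simp add: abs_mult)
  also have "\<dots> \<le> norm (a - b) * (norm a + norm b)"
    by (intro mult_right_mono norm_triangle_ineq3) auto
  finally show ?thesis .
qed

lemma inner_diff_lower_bound:
  fixes u v :: "'a::real_inner"
  shows "((norm u)\<^sup>2 - (norm v)\<^sup>2) / 2 \<le> u \<bullet> (u - v)"
proof -
  have "(norm v)\<^sup>2 = (norm u)\<^sup>2 - 2 * (u \<bullet> (u - v)) + (norm (u - v))\<^sup>2"
    by (simp add: power2_norm_eq_inner algebra_simps inner_commute)
  then show ?thesis using zero_le_power2[of "norm (u - v)"] by (simp add: field_simps)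
qed

lemma power2_norm_vec: "(norm (y::('a::real_normed_vector)^'k))\<^sup>2 = (\<Sum>i\<in>UNIV. (norm (y$i))\<^sup>2)"
  by (simp add: norm_vec_def L2_set_def sum_nonneg)

lemma matrix_vector_mult_sum: "(M::real^'a^'b) *v (\<Sum>j\<in>S. f j) = (\<Sum>j\<in>S. M *v f j)"
  by (induction S rule: infinite_finite_induct) (auto simp: matrix_vector_right_distrib)

lemma inner_matrix_transpose: "(u::real^'n) \<bullet> (M *v v) = (transpose M *v u) \<bullet> v"
  by (metis dot_lmul_matrix inner_commute transpose_matrix_vector)

lemma has_real_derivative_inner:
  assumes "(f has_vector_derivative f') (at t within S)" "(g has_vector_derivative g') (at t within S)"
  shows "((\<lambda>s. f s \<bullet> g s) has_real_derivative (f t \<bullet> g' + f' \<bullet> g t)) (at t within S)"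
proof -
  have "((\<lambda>s. f s \<bullet> g s) has_derivative (\<lambda>h. f t \<bullet> (h *\<^sub>R g') + (h *\<^sub>R f') \<bullet> g t)) (at t within S)"
    using assms unfolding has_vector_derivative_def by (rule has_derivative_inner)
  then show ?thesis unfolding has_field_derivative_def
    by (rule has_derivative_eq_rhs) (auto simp: algebra_simps fun_eq_iff)
qed

lemma norm_diff_le_derivative_bound:
  fixes z :: "real \<Rightarrow> 'a::real_normed_vector"
  assumes der: "\<And>t. t \<ge> t0 \<Longrightarrow> (z has_vector_derivative z' t) (at t)"
    and bound: "\<And>t. t \<ge> t0 \<Longrightarrow> norm (z' t) \<le> K"
    and "s \<ge> t0" "t \<ge> t0"
  shows "norm (z s - z t) \<le> K * \<bar>s - t\<bar>"
proof -
  have "norm (z s - z t) \<le> K * norm (s - t)"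
  proof (rule differentiable_bound[of "{t0..}"])
    show "(z has_derivative (\<lambda>h. h *\<^sub>R z' u)) (at u within {t0..})" if "u \<in> {t0..}" for u
      using der[of u] that has_vector_derivative_at_within unfolding has_vector_derivative_def by auto
    show "onorm (\<lambda>h. h *\<^sub>R z' u) \<le> K" if "u \<in> {t0..}" for u
      using bound[of u] that by (simp add: onorm_scaleR_left[OF bounded_linear_ident] onorm_id)
  qed (use assms in auto)
  then show ?thesis by simp
qed

lemma lyapunov_barbalat:
  fixes V V' h :: "real \<Rightarrow> real"
  assumes der: "\<And>t. t \<ge> t0 \<Longrightarrow> (V has_real_derivative V' t) (at t)"
    and decrease: "\<And>t. t \<ge> t0 \<Longrightarrow> V' t \<le> - h t"
    and h_nonneg: "\<And>t. t \<ge> t0 \<Longrightarrow> h t \<ge> 0"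
    and V_lower: "\<And>t. t \<ge> t0 \<Longrightarrow> V t \<ge> 0"
    and lip: "\<And>s t. s \<ge> t0 \<Longrightarrow> t \<ge> t0 \<Longrightarrow> \<bar>h s - h t\<bar> \<le> K * \<bar>s - t\<bar>"
    and K: "K \<ge> 0"
  shows "(h \<longlongrightarrow> 0) at_top"
proof (rule tendstoI)
  have mono: "V v \<le> V u" if "t0 \<le> u" "u \<le> v" for u v
  proof (rule DERIV_nonpos_imp_nonincreasing[OF that(2)])
    fix s assume "u \<le> s" "s \<le> v"
    then have "s \<ge> t0" using that by simp
    then show "\<exists>y. DERIV V s :> y \<and> y \<le> 0"
      using der[of s] decrease[of s] h_nonneg[of s] by (intro exI[of _ "V' s"]) simp
  qed
  define m where "m = Inf (V ` {t0..})"
  have bdd: "bdd_below (V ` {t0..})" using V_lower by (auto intro!: bdd_belowI[of _ 0])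
  have m_le: "m \<le> V t" if "t \<ge> t0" for t unfolding m_def using bdd that by (auto intro: cInf_lower)
  fix e :: real assume e: "e > 0"
  define \<delta> where "\<delta> = e / (2 * (K + 1))"
  have \<delta>: "\<delta> > 0" "K * \<delta> \<le> e / 2" using e K unfolding \<delta>_def by (simp_all add: field_simps)
  obtain t1 where t1: "t1 \<ge> t0" "V t1 < m + \<delta> * e / 2"
    using cInf_less_iff[OF _ bdd, of "m + \<delta> * e / 2"] \<delta> e unfolding m_def[symmetric] by auto
  text \<open>If h were large at t, it would stay large on [t, t + \<delta>], and V would drop below its infimum.\<close>
  have small: "h t < e" if t: "t \<ge> t1" for t
  proof (rule ccontr)
    assume "\<not> h t < e"
    obtain \<xi> where \<xi>: "t < \<xi>" "\<xi> < t + \<delta>" and eq: "V (t + \<delta>) - V t = \<delta> * V' \<xi>"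
      using MVT2[of t "t + \<delta>" V V'] \<delta> der t t1 by auto
    have "\<bar>h \<xi> - h t\<bar> \<le> K * \<delta>"
      using lip[of \<xi> t] \<xi> t t1 K by (smt (verit) mult_left_mono)
    then have "V' \<xi> \<le> - (e / 2)" using decrease[of \<xi>] \<xi> t t1 \<delta> \<open>\<not> h t < e\<close> by linarith
    then have "V (t + \<delta>) \<le> V t - \<delta> * e / 2" using eq \<delta> mult_left_mono[of "V' \<xi>" "- (e / 2)" \<delta>] by simp
    moreover have "V t \<le> V t1" "m \<le> V (t + \<delta>)" using mono m_le t t1 \<delta> by auto
    ultimately show False using t1 by simp
  qed
  have "dist (h t) 0 < e" if "t \<ge> t1" for t
    using small[OF that] h_nonneg[of t] that t1(1) by (simp add: dist_real_def)
  then show "\<forall>\<^sub>F t in at_top. dist (h t) 0 < e"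
    unfolding eventually_at_top_linorder by blast
qed

lemma barbalat_derivative:
  fixes f g :: "real \<Rightarrow> real"
  assumes der: "\<And>t. t \<ge> t0 \<Longrightarrow> (f has_real_derivative g t) (at t)"
    and f: "(f \<longlongrightarrow> 0) at_top"
    and lip: "\<And>s t. s \<ge> t0 \<Longrightarrow> t \<ge> t0 \<Longrightarrow> \<bar>g s - g t\<bar> \<le> K * \<bar>s - t\<bar>"
    and K: "K \<ge> 0"
  shows "(g \<longlongrightarrow> 0) at_top"
proof (rule tendstoI)
  fix e :: real assume e: "e > 0"
  define \<delta> where "\<delta> = e / (2 * (K + 1))"
  have \<delta>: "\<delta> > 0" "K * \<delta> \<le> e / 2" using e K unfolding \<delta>_def by (simp_all add: field_simps)
  have "\<forall>\<^sub>F t in at_top. dist (f t) 0 < \<delta> * e / 4"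
    using f \<delta> e by (intro tendstoD) auto
  then obtain t1 where t1: "\<And>t. t \<ge> t1 \<Longrightarrow> \<bar>f t\<bar> < \<delta> * e / 4"
    unfolding eventually_at_top_linorder dist_real_def by auto
  have "dist (g t) 0 < e" if t: "t \<ge> max t0 t1" for t
  proof -
    obtain \<xi> where \<xi>: "t < \<xi>" "\<xi> < t + \<delta>" and eq: "f (t + \<delta>) - f t = \<delta> * g \<xi>"
      using MVT2[of t "t + \<delta>" f g] \<delta> der t by auto
    have "\<bar>\<delta> * g \<xi>\<bar> < \<delta> * e / 2"
      using eq t1[of t] t1[of "t + \<delta>"] t \<delta> by linarith
    then have "\<delta> * \<bar>g \<xi>\<bar> < \<delta> * (e / 2)" using \<delta>(1) by (simp add: abs_mult abs_of_pos)
    then have "\<bar>g \<xi>\<bar> < e / 2" using mult_less_cancel_left_pos[OF \<delta>(1)] by blast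
    moreover have "\<bar>g \<xi> - g t\<bar> \<le> K * \<delta>"
      using lip[of \<xi> t] \<xi> t K by (smt (verit) mult_left_mono max.cobounded1)
    ultimately show ?thesis using \<delta> by (simp add: dist_real_def)
  qed
  then show "\<forall>\<^sub>F t in at_top. dist (g t) 0 < e"
    unfolding eventually_at_top_linorder by blast
qed

lemma lyapunov_bounded:
  fixes z :: "real \<Rightarrow> 'a::real_normed_vector"
  assumes der: "\<And>t. t \<ge> t0 \<Longrightarrow> (V has_real_derivative V' t) (at t)"
    and decrease: "\<And>t. t \<ge> t0 \<Longrightarrow> V' t \<le> 0"
    and lower: "\<And>t. t \<ge> t0 \<Longrightarrow> \<kappa> * (norm (z t))\<^sup>2 \<le> V t" and \<kappa>: "\<kappa> > 0"
  shows "bounded (z ` {t0..})"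
proof -
  have "(norm (z t))\<^sup>2 \<le> V t0 / \<kappa>" if "t \<ge> t0" for t
  proof -
    have "V t \<le> V t0"
      using that der decrease by (intro DERIV_nonpos_imp_nonincreasing[OF that]) force
    then show ?thesis using lower[OF that] \<kappa> by (simp add: field_simps)
  qed
  then have "norm (z t) \<le> sqrt (V t0 / \<kappa>)" if "t \<ge> t0" for t
    using that by (simp add: real_le_rsqrt)
  then show ?thesis unfolding bounded_iff by blast
qed

lemma linear_flow_lipschitz:
  fixes z :: "real \<Rightarrow> 'a::real_normed_vector"
  assumes M: "bounded_linear M" and L: "bounded_linear L"
    and flow: "\<And>t. t \<ge> t0 \<Longrightarrow> (z has_vector_derivative M (z t)) (at t)"
    and bounded: "bounded (z ` {t0..})"
  obtains K where "K \<ge> 0"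
    "\<And>s t. s \<ge> t0 \<Longrightarrow> t \<ge> t0 \<Longrightarrow> norm (L (z s) - L (z t)) \<le> K * \<bar>s - t\<bar>"
proof -
  obtain Z where Z: "Z > 0" "\<And>t. t \<ge> t0 \<Longrightarrow> norm (z t) \<le> Z"
    using bounded unfolding bounded_pos by auto
  obtain KM where KM: "KM \<ge> 0" "\<And>v. norm (M v) \<le> norm v * KM"
    using bounded_linear.nonneg_bounded[OF M] by blast
  obtain KL where KL: "KL \<ge> 0" "\<And>v. norm (L v) \<le> norm v * KL"
    using bounded_linear.nonneg_bounded[OF L] by blast
  have M_bound: "norm (M (z t)) \<le> Z * KM" if "t \<ge> t0" for t
    using order_trans[OF KM(2) mult_right_mono[OF Z(2)[OF that] KM(1)]] .
  have z_lip: "norm (z s - z t) \<le> Z * KM * \<bar>s - t\<bar>" if "s \<ge> t0" "t \<ge> t0" for s t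
    using norm_diff_le_derivative_bound[OF flow M_bound that] .
  have L_lip: "norm (L (z s) - L (z t)) \<le> Z * KM * KL * \<bar>s - t\<bar>" if "s \<ge> t0" "t \<ge> t0" for s t
  proof -
    have "norm (L (z s) - L (z t)) = norm (L (z s - z t))"
      by (simp add: linear_diff[OF bounded_linear.linear[OF L]])
    also have "\<dots> \<le> norm (z s - z t) * KL" by (rule KL(2))
    also have "\<dots> \<le> Z * KM * \<bar>s - t\<bar> * KL" by (intro mult_right_mono z_lip that KL(1))
    finally show ?thesis by (simp add: ac_simps)
  qed
  show ?thesis by (rule that[OF _ L_lip]) (use Z KM KL in simp_all)
qed

lemma lyapunov_output_tendsto_zero:
  fixes z :: "real \<Rightarrow> 'a::real_normed_vector"
  assumes M: "bounded_linear M" and L: "bounded_linear L"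
    and flow: "\<And>t. t \<ge> t0 \<Longrightarrow> (z has_vector_derivative M (z t)) (at t)"
    and bounded: "bounded (z ` {t0..})"
    and der: "\<And>t. t \<ge> t0 \<Longrightarrow> (V has_real_derivative V' t) (at t)"
    and decrease: "\<And>t. t \<ge> t0 \<Longrightarrow> V' t \<le> - (c * (norm (L (z t)))\<^sup>2)" and c: "c > 0"
    and V_nonneg: "\<And>t. t \<ge> t0 \<Longrightarrow> V t \<ge> 0"
  shows "((\<lambda>t. L (z t)) \<longlongrightarrow> 0) at_top"
proof -
  obtain K where K: "K \<ge> 0"
    "\<And>s t. s \<ge> t0 \<Longrightarrow> t \<ge> t0 \<Longrightarrow> norm (L (z s) - L (z t)) \<le> K * \<bar>s - t\<bar>"
    using linear_flow_lipschitz[OF M L flow bounded] by blast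
  have "bounded ((L \<circ> z) ` {t0..})"
    using bounded_linear_image[OF bounded L] by (simp add: image_comp)
  then obtain Y where Y: "Y > 0" "\<And>t. t \<ge> t0 \<Longrightarrow> norm (L (z t)) \<le> Y"
    unfolding bounded_pos by auto
  have "((\<lambda>t. c * (norm (L (z t)))\<^sup>2) \<longlongrightarrow> 0) at_top"
  proof (rule lyapunov_barbalat[of t0 V V'])
    show "\<bar>c * (norm (L (z s)))\<^sup>2 - c * (norm (L (z t)))\<^sup>2\<bar> \<le> c * (K * (2 * Y)) * \<bar>s - t\<bar>"
      if "s \<ge> t0" "t \<ge> t0" for s t
    proof -
      have "\<bar>c * (norm (L (z s)))\<^sup>2 - c * (norm (L (z t)))\<^sup>2\<bar>
          = c * \<bar>(norm (L (z s)))\<^sup>2 - (norm (L (z t)))\<^sup>2\<bar>"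
        using c by (simp add: abs_mult flip: right_diff_distrib)
      also have "\<dots> \<le> c * (norm (L (z s) - L (z t)) * (norm (L (z s)) + norm (L (z t))))"
        using c abs_norm_power2_diff_le by (intro mult_left_mono) auto
      also have "\<dots> \<le> c * ((K * \<bar>s - t\<bar>) * (2 * Y))"
        using c K Y(2)[of s] Y(2)[of t] that by (intro mult_left_mono mult_mono) auto
      finally show ?thesis by (simp add: algebra_simps)
    qed
    show "(V has_real_derivative V' t) (at t)" "V t \<ge> 0" if "t \<ge> t0" for t
      using der V_nonneg that by auto
    show "V' t \<le> - (c * (norm (L (z t)))\<^sup>2)" if "t \<ge> t0" for t
      using decrease[OF that] .
    show "c * (norm (L (z t)))\<^sup>2 \<ge> 0" for t
      using c by simp
    show "c * (K * (2 * Y)) \<ge> 0"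
      using c K Y by simp
  qed
  then have "((\<lambda>t. (1 / c) * (c * (norm (L (z t)))\<^sup>2)) \<longlongrightarrow> (1 / c) * 0) at_top"
    by (rule tendsto_mult_left)
  then have "((\<lambda>t. (norm (L (z t)))\<^sup>2) \<longlongrightarrow> 0) at_top"
    using c by simp
  then show ?thesis by (simp add: tendsto_norm_zero_iff)
qed

lemma linear_flow_output_derivative_tendsto_zero:
  fixes z :: "real \<Rightarrow> 'a::real_normed_vector" and L :: "'a \<Rightarrow> 'b::euclidean_space"
  assumes M: "bounded_linear M" and L: "bounded_linear L"
    and flow: "\<And>t. t \<ge> t0 \<Longrightarrow> (z has_vector_derivative M (z t)) (at t)"
    and bounded: "bounded (z ` {t0..})"
    and converges: "((\<lambda>t. L (z t)) \<longlongrightarrow> 0) at_top"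
  shows "((\<lambda>t. L (M (z t))) \<longlongrightarrow> 0) at_top"
proof -
  obtain K where K: "K \<ge> 0"
    "\<And>s t. s \<ge> t0 \<Longrightarrow> t \<ge> t0 \<Longrightarrow> norm (L (M (z s)) - L (M (z t))) \<le> K * \<bar>s - t\<bar>"
    using linear_flow_lipschitz[OF M bounded_linear_compose[OF L M] flow bounded] by blast
  have "((\<lambda>t. L (M (z t)) \<bullet> i) \<longlongrightarrow> 0) at_top" if "i \<in> Basis" for i
  proof (rule barbalat_derivative)
    show "((\<lambda>t. L (z t) \<bullet> i) has_real_derivative L (M (z t)) \<bullet> i) (at t)" if "t \<ge> t0" for t
      using bounded_linear.has_vector_derivative[OF bounded_linear_compose[OF bounded_linear_inner_left L] flow[OF that]]
      by (simp add: has_real_derivative_iff_has_vector_derivative)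
    show "((\<lambda>t. L (z t) \<bullet> i) \<longlongrightarrow> 0) at_top"
      using tendsto_inner[OF converges tendsto_const, of i] by simp
    show "\<bar>L (M (z s)) \<bullet> i - L (M (z t)) \<bullet> i\<bar> \<le> K * \<bar>s - t\<bar>" if "s \<ge> t0" "t \<ge> t0" for s t
      using K(2)[OF that] Basis_le_norm[OF \<open>i \<in> Basis\<close>, of "L (M (z s)) - L (M (z t))"]
      by (simp add: inner_diff_left)
  qed (use K in auto)
  then show ?thesis
    unfolding tendsto_componentwise_iff[of "\<lambda>t. L (M (z t))"] by simp
qed

lemma tendsto_zero_if_outputs_tendsto_zero:
  fixes z :: "'c \<Rightarrow> 'a::euclidean_space" and Y :: "nat \<Rightarrow> 'a \<Rightarrow> 'b::real_normed_vector"
  assumes lin: "\<And>k. k < n \<Longrightarrow> bounded_linear (Y k)"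
    and joint_kernel: "\<And>v. (\<And>k. k < n \<Longrightarrow> Y k v = 0) \<Longrightarrow> v = 0"
    and outputs: "\<And>k. k < n \<Longrightarrow> ((\<lambda>t. Y k (z t)) \<longlongrightarrow> 0) F"
  shows "(z \<longlongrightarrow> 0) F"
proof -
  define q where "q v = (\<Sum>k<n. (norm (Y k v))\<^sup>2)" for v
  have q_cont: "continuous_on UNIV q"
    unfolding q_def using lin
    by (intro continuous_on_sum continuous_on_power continuous_on_norm linear_continuous_on) auto
  have q_hom: "q (s *\<^sub>R v) = s\<^sup>2 * q v" for s v
  proof -
    have "(norm (Y k (s *\<^sub>R v)))\<^sup>2 = s\<^sup>2 * (norm (Y k v))\<^sup>2" if "k < n" for k
      using lin[OF that] by (simp add: linear_scale[OF bounded_linear.linear] power_mult_distrib)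
    then show ?thesis unfolding q_def sum_distrib_left by (intro sum.cong) auto
  qed
  have q_pos: "q v > 0" if "v \<noteq> 0" for v
  proof -
    obtain k where k: "k < n" "Y k v \<noteq> 0" using joint_kernel \<open>v \<noteq> 0\<close> by blast
    have "(norm (Y k v))\<^sup>2 \<le> q v" unfolding q_def by (rule member_le_sum) (use k in auto)
    moreover have "(norm (Y k v))\<^sup>2 > 0" using k by simp
    ultimately show ?thesis by linarith
  qed
  obtain \<mu> where \<mu>: "\<mu> > 0" "\<And>v. \<mu> * (norm v)\<^sup>2 \<le> q v"
    using quadratic_form_lower_bound[OF q_cont q_hom q_pos] by blast
  have "((\<lambda>t. (norm (Y k (z t)))\<^sup>2) \<longlongrightarrow> 0) F" if "k \<in> {..<n}" for k
    using outputs[of k] that tendsto_power[OF tendsto_norm, of "\<lambda>t. Y k (z t)" 0 F 2] by simp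
  then have "((\<lambda>t. q (z t)) \<longlongrightarrow> 0) F"
    unfolding q_def by (rule tendsto_null_sum)
  then have lim: "((\<lambda>t. q (z t) / \<mu>) \<longlongrightarrow> 0) F"
    using tendsto_divide_zero by blast
  have "((\<lambda>t. (norm (z t))\<^sup>2) \<longlongrightarrow> 0) F"
  proof (rule real_tendsto_sandwich[OF _ _ tendsto_const lim])
    show "\<forall>\<^sub>F t in F. (norm (z t))\<^sup>2 \<le> q (z t) / \<mu>"
      unfolding pos_le_divide_eq[OF \<mu>(1)] using \<mu>(2) by (simp add: mult.commute)
  qed simp
  then show ?thesis by (simp add: tendsto_norm_zero_iff)
qed

section \<open>Networks whose underlying graph is a tree\<close>

locale tree_network =
  fixes w :: "'k::finite \<Rightarrow> 'k \<Rightarrow> real" and T :: "'k \<Rightarrow> 'k \<Rightarrow> bool" and r :: 'k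
  assumes weights_nonneg: "\<And>i j. i \<noteq> j \<Longrightarrow> w i j \<ge> 0"
    and underlying_tree: "is_tree (uedge w)"
    and tree_arc: "\<And>i j. T i j \<Longrightarrow> arc w i j"
    and spanning_tree: "is_tree T"
    and no_arc_into_root: "\<And>i. \<not> T i r"
    and unique_parent: "\<And>v. v \<noteq> r \<Longrightarrow> \<exists>!i. T i v"
begin

definition parent :: "'k \<Rightarrow> 'k" where
  "parent v = (THE i. T i v)"

lemma T_parent: "v \<noteq> r \<Longrightarrow> T (parent v) v"
  unfolding parent_def using unique_parent by (metis theI')

lemma parent_eqI: "T i v \<Longrightarrow> parent v = i"
  unfolding parent_def using unique_parent no_arc_into_root by (metis the1_equality)

lemma parent_neq: "v \<noteq> r \<Longrightarrow> parent v \<noteq> v"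
  using T_parent tree_arc unfolding arc_def by blast

lemma weight_to_parent_pos: "v \<noteq> r \<Longrightarrow> w v (parent v) > 0"
  using T_parent tree_arc unfolding arc_def by blast

lemma uadj_parent: "v \<noteq> r \<Longrightarrow> uadj (uedge w) v (parent v)"
  using parent_neq weight_to_parent_pos weights_nonneg unfolding uadj_def uedge_def
  by (metis add_pos_nonneg)

lemma funpow_parent_reaches_root: "\<exists>n. (parent ^^ n) v = r"
proof -
  have "(uadj T)\<^sup>*\<^sup>* r v" using spanning_tree unfolding is_tree_def graph_connected_def by blast
  then show ?thesis
  proof (induction rule: rtranclp_induct)
    case base
    show ?case by (rule exI[of _ 0]) simp
  next
    case (step u v)
    then obtain n where n: "(parent ^^ n) u = r" by blast
    from step(2) consider "T u v" | "T v u" unfolding uadj_def by blast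
    then show ?case
    proof cases
      case 1
      then have "(parent ^^ Suc n) v = r" using n parent_eqI by (simp add: funpow_Suc_right del: funpow.simps)
      then show ?thesis by blast
    next
      case 2
      then obtain m where "n = Suc m" using n no_arc_into_root by (cases n) auto
      then have "(parent ^^ m) v = r" using n parent_eqI[OF 2] by (simp add: funpow_Suc_right del: funpow.simps)
      then show ?thesis by blast
    qed
  qed
qed

definition depth :: "'k \<Rightarrow> nat" where
  "depth v = (LEAST n. (parent ^^ n) v = r)"

lemma funpow_depth: "(parent ^^ depth v) v = r"
  unfolding depth_def using funpow_parent_reaches_root by (rule LeastI_ex)

lemma depth_le: "(parent ^^ n) v = r \<Longrightarrow> depth v \<le> n"
  unfolding depth_def by (rule Least_le)

lemma depth_eq_0_iff: "depth v = 0 \<longleftrightarrow> v = r"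
  using funpow_depth[of v] depth_le[of 0 r] by auto

lemma depth_root [simp]: "depth r = 0"
  by (simp add: depth_eq_0_iff)

lemma depth_parent: "v \<noteq> r \<Longrightarrow> depth v = Suc (depth (parent v))"
proof -
  assume "v \<noteq> r"
  then obtain m where m: "depth v = Suc m" using depth_eq_0_iff by (cases "depth v") auto
  then have "(parent ^^ m) (parent v) = r" using funpow_depth[of v] by (simp add: funpow_Suc_right del: funpow.simps)
  then have "depth (parent v) \<le> m" by (rule depth_le)
  moreover have "depth v \<le> Suc (depth (parent v))"
    using funpow_depth[of "parent v"] by (intro depth_le) (simp add: funpow_Suc_right del: funpow.simps)
  ultimately show ?thesis using m by simp
qed

lemma depth_funpow_parent: "m \<le> depth v \<Longrightarrow> depth ((parent ^^ m) v) = depth v - m"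
proof (induction m)
  case (Suc m)
  have "(parent ^^ m) v \<noteq> r" using depth_le[of m v] Suc.prems by auto
  then show ?case using Suc depth_parent[of "(parent ^^ m) v"] by simp
qed simp

lemma funpow_parent_neq_root: "m < depth v \<Longrightarrow> (parent ^^ m) v \<noteq> r"
  using depth_le[of m v] by auto

lemma parent_parent_neq: "v \<noteq> r \<Longrightarrow> parent v \<noteq> r \<Longrightarrow> parent (parent v) \<noteq> v"
  using depth_parent[of v] depth_parent[of "parent v"] by auto

lemma depth_induct [case_names root parent]:
  assumes "P r" and "\<And>v. v \<noteq> r \<Longrightarrow> P (parent v) \<Longrightarrow> P v"
  shows "P v"
proof (induction "depth v" arbitrary: v rule: less_induct)
  case less
  then show ?case using assms depth_parent[of v] by (cases "v = r") auto
qed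

definition tree_walk :: "'k \<Rightarrow> nat \<Rightarrow> 'k \<Rightarrow> nat \<Rightarrow> nat \<Rightarrow> 'k" where
  "tree_walk i ki j kj m = (if m < ki then (parent ^^ m) i else (parent ^^ (ki + kj - m)) j)"

lemma tree_walk_uadj:
  assumes ki: "ki \<le> depth i" and kj: "kj \<le> depth j"
    and meet: "(parent ^^ ki) i = (parent ^^ kj) j" and m: "m < ki + kj"
  shows "uadj (uedge w) (tree_walk i ki j kj m) (tree_walk i ki j kj (Suc m))"
proof (cases "m < ki")
  case True
  have "tree_walk i ki j kj (Suc m) = parent (tree_walk i ki j kj m)"
  proof (cases "Suc m < ki")
    case False
    then have "ki = Suc m" using True by simp
    moreover have "(parent ^^ kj) j = parent ((parent ^^ m) i)" using meet \<open>ki = Suc m\<close> by simp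
    ultimately show ?thesis using True unfolding tree_walk_def by simp
  qed (use True in \<open>simp add: tree_walk_def\<close>)
  moreover have "tree_walk i ki j kj m \<noteq> r"
    using True ki funpow_parent_neq_root unfolding tree_walk_def by simp
  ultimately show ?thesis using uadj_parent by metis
next
  case False
  define s where "s = ki + kj - Suc m"
  have "ki + kj - m = Suc s" using m unfolding s_def by simp
  then have "tree_walk i ki j kj m = parent (tree_walk i ki j kj (Suc m))"
    "tree_walk i ki j kj (Suc m) = (parent ^^ s) j"
    using False unfolding tree_walk_def s_def by simp_all
  moreover have "(parent ^^ s) j \<noteq> r"
    using kj False m unfolding s_def by (intro funpow_parent_neq_root) linarith
  ultimately show ?thesis using uadj_parent unfolding uadj_def by metis
qed

lemma tree_walk_inj:
  assumes ki: "ki \<le> depth i" and kj: "kj \<le> depth j"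
    and first_meet: "\<And>m m'. m < ki \<Longrightarrow> m' \<le> depth j \<Longrightarrow> (parent ^^ m) i \<noteq> (parent ^^ m') j"
  shows "inj_on (tree_walk i ki j kj) {..ki + kj}"
proof (rule inj_onI)
  fix m1 m2 assume m: "m1 \<in> {..ki + kj}" "m2 \<in> {..ki + kj}"
    and eq: "tree_walk i ki j kj m1 = tree_walk i ki j kj m2"
  consider "m1 < ki" "m2 < ki" | "m1 < ki" "\<not> m2 < ki" | "\<not> m1 < ki" "m2 < ki" | "\<not> m1 < ki" "\<not> m2 < ki"
    by blast
  then show "m1 = m2"
  proof cases
    case 1
    then show ?thesis
      using eq ki depth_funpow_parent[of m1 i] depth_funpow_parent[of m2 i]
      unfolding tree_walk_def by (metis diff_diff_cancel less_imp_le order_trans)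
  next
    case 2
    moreover have "ki + kj - m2 \<le> depth j" using 2 kj by linarith
    ultimately show ?thesis using eq first_meet[of m1 "ki + kj - m2"] unfolding tree_walk_def by simp
  next
    case 3
    moreover have "ki + kj - m1 \<le> depth j" using 3 kj by linarith
    ultimately show ?thesis using eq first_meet[of m2 "ki + kj - m1"] unfolding tree_walk_def by simp
  next
    case 4
    then have "depth ((parent ^^ (ki + kj - m1)) j) = depth ((parent ^^ (ki + kj - m2)) j)"
      using eq unfolding tree_walk_def by simp
    then show ?thesis using 4 m kj depth_funpow_parent by simp
  qed
qed

lemma first_common_ancestor:
  obtains ki kj where "ki \<le> depth i" "kj \<le> depth j" "(parent ^^ ki) i = (parent ^^ kj) j"
    "\<And>m m'. m < ki \<Longrightarrow> m' \<le> depth j \<Longrightarrow> (parent ^^ m) i \<noteq> (parent ^^ m') j"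
proof -
  define P where "P k \<longleftrightarrow> (\<exists>k' \<le> depth j. (parent ^^ k) i = (parent ^^ k') j)" for k
  have "P (depth i)" unfolding P_def using funpow_depth[of i] funpow_depth[of j] by auto
  define ki where "ki = (LEAST k. P k)"
  have "P ki" "ki \<le> depth i"
    unfolding ki_def using \<open>P (depth i)\<close> by (auto intro: LeastI Least_le)
  then obtain kj where "kj \<le> depth j" "(parent ^^ ki) i = (parent ^^ kj) j"
    unfolding P_def by blast
  moreover have "(parent ^^ m) i \<noteq> (parent ^^ m') j" if "m < ki" "m' \<le> depth j" for m m'
    using not_less_Least[of m P] that unfolding ki_def P_def by blast
  ultimately show thesis by (rule that[OF \<open>ki \<le> depth i\<close>])
qed

text \<open>Otherwise the tree walk from i up to the first common ancestor and down to j would close a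
  cycle with the edge i -- j.\<close>
lemma weight_pos_imp_parent:
  assumes ij: "i \<noteq> j" and w: "w i j > 0"
  shows "(i \<noteq> r \<and> j = parent i) \<or> (j \<noteq> r \<and> i = parent j)"
proof (rule ccontr)
  assume not_tree_edge: "\<not> ?thesis"
  obtain ki kj where ki: "ki \<le> depth i" and kj: "kj \<le> depth j"
    and meet: "(parent ^^ ki) i = (parent ^^ kj) j"
    and first_meet: "\<And>m m'. m < ki \<Longrightarrow> m' \<le> depth j \<Longrightarrow> (parent ^^ m) i \<noteq> (parent ^^ m') j"
    by (rule first_common_ancestor) (rule that)
  define vs where "vs = map (tree_walk i ki j kj) [0..<Suc (ki + kj)]"
  have "ki + kj \<ge> 2"
  proof (rule ccontr)
    assume "\<not> ki + kj \<ge> 2"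
    then consider "ki = 0" "kj = 0" | "ki = 1" "kj = 0" | "ki = 0" "kj = 1" by linarith
    then show False
      using meet ij not_tree_edge ki kj depth_eq_0_iff by cases fastforce+
  qed
  moreover have "set [0..<Suc (ki + kj)] = {..ki + kj}" by auto
  then have "distinct vs"
    unfolding vs_def using tree_walk_inj[OF ki kj first_meet]
    by (simp add: distinct_map del: upt_Suc)
  moreover have "\<forall>m < length vs - 1. uadj (uedge w) (vs ! m) (vs ! Suc m)"
    unfolding vs_def using tree_walk_uadj[OF ki kj meet]
    by (simp del: upt_Suc)
  moreover have "hd vs = i" "last vs = j"
    unfolding vs_def tree_walk_def using meet by (auto simp: hd_map last_map simp del: upt_Suc)
  moreover have "uadj (uedge w) j i"
    using ij w weights_nonneg unfolding uadj_def uedge_def by (metis add_pos_nonneg)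
  ultimately have "has_cycle (uedge w)"
    unfolding has_cycle_def vs_def by (intro exI[of _ vs]) (auto simp: vs_def)
  then show False using underlying_tree unfolding is_tree_def by blast
qed

lemma weight_from_parent_nonneg: "v \<noteq> r \<Longrightarrow> w (parent v) v \<ge> 0"
  using weights_nonneg parent_neq by metis

primrec node_weight_rec :: "('k \<Rightarrow> real) \<Rightarrow> nat \<Rightarrow> 'k \<Rightarrow> real" where
  "node_weight_rec d 0 v = 1"
| "node_weight_rec d (Suc n) v =
     (node_weight_rec d n (parent v) * w (parent v) v + d v) / w v (parent v)"

text \<open>With d = 0 these weights form a left null vector of the Laplacian; a positive slack d makes
  the weighted Laplacian form coercive (weighted_laplacian_coercive).\<close>
definition node_weight :: "('k \<Rightarrow> real) \<Rightarrow> 'k \<Rightarrow> real" where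
  "node_weight d v = node_weight_rec d (depth v) v"

abbreviation null_weight :: "'k \<Rightarrow> real" where
  "null_weight \<equiv> node_weight (\<lambda>_. 0)"

lemma node_weight_root: "node_weight d r = 1"
  by (simp add: node_weight_def)

lemma node_weight_parent:
  "v \<noteq> r \<Longrightarrow> node_weight d v = (node_weight d (parent v) * w (parent v) v + d v) / w v (parent v)"
  by (simp add: node_weight_def depth_parent)

lemma node_weight_balance:
  "v \<noteq> r \<Longrightarrow> node_weight d v * w v (parent v) = node_weight d (parent v) * w (parent v) v + d v"
  using node_weight_parent[of v d] weight_to_parent_pos[of v] by simp

lemma node_weight_nonneg: "(\<And>v. d v \<ge> 0) \<Longrightarrow> node_weight d v \<ge> 0"
proof (induction v rule: depth_induct)
  case (parent v)
  then have "node_weight d (parent v) * w (parent v) v + d v \<ge> 0"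
    using weight_from_parent_nonneg by simp
  then show ?case
    using node_weight_parent[OF parent(1)] weight_to_parent_pos[OF parent(1)] by simp
qed (simp add: node_weight_root)

lemma node_weight_pos: "(\<And>v. d v > 0) \<Longrightarrow> node_weight d v > 0"
proof (induction v rule: depth_induct)
  case (parent v)
  then have "node_weight d (parent v) * w (parent v) v + d v > 0"
    using weight_from_parent_nonneg by (simp add: add_nonneg_pos)
  then show ?case using node_weight_parent[OF parent(1)] weight_to_parent_pos[OF parent(1)] by simp
qed (simp add: node_weight_root)

lemma node_weight_mono:
  assumes "\<And>v. 0 \<le> d1 v" "\<And>v. d1 v \<le> d2 v"
  shows "node_weight d1 v \<le> node_weight d2 v"
proof (induction v rule: depth_induct)
  case (parent v)
  then have "node_weight d1 (parent v) * w (parent v) v + d1 v \<le> node_weight d2 (parent v) * w (parent v) v + d2 v"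
    using assms weight_from_parent_nonneg by (simp add: add_mono mult_right_mono)
  then show ?case
    using node_weight_parent[OF parent(1)] weight_to_parent_pos[OF parent(1)] by (simp add: divide_right_mono)
qed (simp add: node_weight_root)

lemma null_weight_nonneg: "null_weight v \<ge> 0"
  by (rule node_weight_nonneg) simp

lemma null_weight_balance: "v \<noteq> r \<Longrightarrow> null_weight v * w v (parent v) = null_weight (parent v) * w (parent v) v"
  using node_weight_balance[of v "\<lambda>_. 0"] by simp

lemma null_weight_pos_iff:
  "v \<noteq> r \<Longrightarrow> null_weight v > 0 \<longleftrightarrow> null_weight (parent v) * w (parent v) v > 0"
  using null_weight_balance[of v] weight_to_parent_pos[of v] null_weight_nonneg[of v]
  by (metis mult_pos_pos zero_less_mult_pos2)

text \<open>Only tree edges carry weight (weight_pos_imp_parent).\<close>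
lemma sum_pairs_eq_sum_tree_edges:
  fixes F :: "'k \<Rightarrow> 'k \<Rightarrow> 'a::real_vector"
  shows "(\<Sum>i\<in>UNIV. \<Sum>j\<in>UNIV - {i}. w i j *\<^sub>R F i j)
       = (\<Sum>v\<in>UNIV - {r}. w v (parent v) *\<^sub>R F v (parent v) + w (parent v) v *\<^sub>R F (parent v) v)"
proof -
  define f where "f = (\<lambda>(i, j). w i j *\<^sub>R F i j)"
  define up where "up = (\<lambda>v. (v, parent v)) ` (UNIV - {r})"
  define down where "down = (\<lambda>v. (parent v, v)) ` (UNIV - {r})"
  have "(\<Sum>i\<in>UNIV. \<Sum>j\<in>UNIV - {i}. w i j *\<^sub>R F i j) = sum f (SIGMA i:UNIV. UNIV - {i})"
    unfolding f_def by (rule sum.Sigma) auto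
  also have "\<dots> = sum f (up \<union> down)"
  proof (rule sum.mono_neutral_right)
    show "up \<union> down \<subseteq> (SIGMA i:UNIV. UNIV - {i})"
      unfolding up_def down_def using parent_neq by fastforce
    show "\<forall>p \<in> (SIGMA i:UNIV. UNIV - {i}) - (up \<union> down). f p = 0"
    proof
      fix p assume p: "p \<in> (SIGMA i:UNIV. UNIV - {i}) - (up \<union> down)"
      obtain i j where p_eq: "p = (i, j)" by (cases p)
      then have "i \<noteq> j" "(i, j) \<notin> up" "(i, j) \<notin> down" using p by auto
      then have "\<not> w i j > 0" using weight_pos_imp_parent[of i j] unfolding up_def down_def by auto
      then have "w i j = 0" using weights_nonneg[OF \<open>i \<noteq> j\<close>] by simp
      then show "f p = 0" unfolding f_def p_eq by simp
    qed
  qed simp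
  also have "\<dots> = sum f up + sum f down"
    by (rule sum.union_disjoint) (auto simp: up_def down_def dest: parent_parent_neq)
  also have "\<dots> = (\<Sum>v\<in>UNIV - {r}. w v (parent v) *\<^sub>R F v (parent v))
                + (\<Sum>v\<in>UNIV - {r}. w (parent v) v *\<^sub>R F (parent v) v)"
    unfolding up_def down_def f_def by (subst (1 2) sum.reindex) (auto intro: inj_onI)
  finally show ?thesis by (simp add: sum.distrib)
qed

definition laplacian_apply :: "('k \<Rightarrow> 'a::real_vector) \<Rightarrow> 'k \<Rightarrow> 'a" where
  "laplacian_apply u i = (\<Sum>j\<in>UNIV. laplacian w i j *\<^sub>R u j)"

lemma laplacian_apply_eq: "laplacian_apply u i = (\<Sum>j\<in>UNIV - {i}. w i j *\<^sub>R (u i - u j))"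
proof -
  have "laplacian_apply u i = laplacian w i i *\<^sub>R u i + (\<Sum>j\<in>UNIV - {i}. laplacian w i j *\<^sub>R u j)"
    unfolding laplacian_apply_def by (simp add: sum.remove[of UNIV i])
  also have "\<dots> = (\<Sum>j\<in>UNIV - {i}. w i j) *\<^sub>R u i + (\<Sum>j\<in>UNIV - {i}. - (w i j *\<^sub>R u j))"
    unfolding laplacian_def by (intro arg_cong2[where f = "(+)"] sum.cong) auto
  finally show ?thesis
    by (simp add: scaleR_sum_left sum_subtractf[symmetric] scaleR_diff_right sum_negf)
qed

lemma null_weight_laplacian: "(\<Sum>i\<in>UNIV. null_weight i *\<^sub>R laplacian_apply u i) = 0"
proof -
  have "(\<Sum>i\<in>UNIV. null_weight i *\<^sub>R laplacian_apply u i)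
      = (\<Sum>i\<in>UNIV. \<Sum>j\<in>UNIV - {i}. w i j *\<^sub>R (null_weight i *\<^sub>R (u i - u j)))"
    unfolding laplacian_apply_eq by (simp add: scaleR_sum_right mult.commute)
  also have "\<dots> = (\<Sum>v\<in>UNIV - {r}.
      (null_weight v * w v (parent v) - null_weight (parent v) * w (parent v) v) *\<^sub>R (u v - u (parent v)))"
    unfolding sum_pairs_eq_sum_tree_edges by (rule sum.cong) (auto simp: algebra_simps)
  finally show ?thesis using null_weight_balance by simp
qed

lemma weighted_laplacian_form:
  fixes u :: "'k \<Rightarrow> 'a::real_inner"
  shows "(\<Sum>i\<in>UNIV. node_weight d i * (u i \<bullet> laplacian_apply u i))
    = (\<Sum>v\<in>UNIV - {r}. node_weight d (parent v) * w (parent v) v * (norm (u v - u (parent v)))\<^sup>2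
                        + d v * (u v \<bullet> (u v - u (parent v))))"
proof -
  have "(\<Sum>i\<in>UNIV. node_weight d i * (u i \<bullet> laplacian_apply u i))
      = (\<Sum>i\<in>UNIV. \<Sum>j\<in>UNIV - {i}. w i j *\<^sub>R (node_weight d i * (u i \<bullet> (u i - u j))))"
    unfolding laplacian_apply_eq by (simp add: inner_sum_right sum_distrib_left algebra_simps)
  also have "\<dots> = (\<Sum>v\<in>UNIV - {r}.
      (node_weight d v * w v (parent v)) * (u v \<bullet> (u v - u (parent v)))
      + node_weight d (parent v) * w (parent v) v * (u (parent v) \<bullet> (u (parent v) - u v)))"
    unfolding sum_pairs_eq_sum_tree_edges by (rule sum.cong) (auto simp: algebra_simps)
  also have "\<dots> = (\<Sum>v\<in>UNIV - {r}. node_weight d (parent v) * w (parent v) v * (norm (u v - u (parent v)))\<^sup>2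
                        + d v * (u v \<bullet> (u v - u (parent v))))"
  proof (intro sum.cong refl)
    fix v assume v: "v \<in> UNIV - {r}"
    define X where "X = u v \<bullet> (u v - u (parent v))"
    define Y where "Y = u (parent v) \<bullet> (u (parent v) - u v)"
    have XY: "X + Y = (norm (u v - u (parent v)))\<^sup>2"
      unfolding X_def Y_def by (simp add: power2_norm_eq_inner inner_diff_left inner_diff_right inner_commute)
    show "node_weight d v * w v (parent v) * X + node_weight d (parent v) * w (parent v) v * Y
        = node_weight d (parent v) * w (parent v) v * (norm (u v - u (parent v)))\<^sup>2 + d v * X"
      using node_weight_balance[of v d] v by (simp add: algebra_simps flip: XY)
  qed
  finally show ?thesis .
qed

definition dirichlet_energy :: "('a::real_normed_vector)^'k \<Rightarrow> real" where
  "dirichlet_energy y =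
     (\<Sum>v\<in>UNIV - {r}. null_weight (parent v) * w (parent v) v * (norm (y$v - y$parent v))\<^sup>2)"

lemma null_weight_parent_pos:
  "null_weight (parent v) * w (parent v) v > 0 \<Longrightarrow> null_weight (parent v) > 0"
  using null_weight_nonneg[of "parent v"] by (auto simp: zero_less_mult_iff)

lemma dirichlet_energy_nonneg: "dirichlet_energy y \<ge> 0"
  unfolding dirichlet_energy_def
  using null_weight_nonneg weight_from_parent_nonneg by (intro sum_nonneg) auto

lemma dirichlet_energy_eq_0_imp_eq_root:
  assumes "dirichlet_energy y = 0" and "null_weight v > 0"
  shows "y$v = y$r"
  using assms(2)
proof (induction v rule: depth_induct)
  case (parent v)
  then have pos: "null_weight (parent v) * w (parent v) v > 0" using null_weight_pos_iff by blast
  then have "null_weight (parent v) > 0" by (rule null_weight_parent_pos)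
  moreover have "null_weight (parent v) * w (parent v) v * (norm (y$v - y$parent v))\<^sup>2 = 0"
    using assms(1) parent(1) null_weight_nonneg weight_from_parent_nonneg
    unfolding dirichlet_energy_def by (subst (asm) sum_nonneg_eq_0_iff) auto
  moreover have "w (parent v) v \<noteq> 0" using pos by auto
  ultimately show ?case using parent by simp
qed simp

lemma dirichlet_energy_scaleR: "dirichlet_energy (s *\<^sub>R y) = s\<^sup>2 * dirichlet_energy y"
  unfolding dirichlet_energy_def
  by (simp add: sum_distrib_left power_mult_distrib mult_ac flip: scaleR_diff_right)

lemma dirichlet_energy_restrict_null_weight_pos:
  "dirichlet_energy (\<chi> v. if null_weight v > 0 then y$v else 0) = dirichlet_energy y"
  unfolding dirichlet_energy_def
proof (intro sum.cong refl)
  fix v assume "v \<in> UNIV - {r}"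
  then have "null_weight (parent v) * w (parent v) v > 0 \<Longrightarrow> null_weight v > 0 \<and> null_weight (parent v) > 0"
    using null_weight_pos_iff null_weight_parent_pos by blast
  moreover have "null_weight (parent v) * w (parent v) v \<ge> 0"
    using \<open>v \<in> UNIV - {r}\<close> null_weight_nonneg weight_from_parent_nonneg by simp
  ultimately show "null_weight (parent v) * w (parent v) v
        * (norm ((\<chi> v. if null_weight v > 0 then y$v else 0) $ v
                 - (\<chi> v. if null_weight v > 0 then y$v else 0) $ parent v))\<^sup>2
      = null_weight (parent v) * w (parent v) v * (norm (y$v - y$parent v))\<^sup>2"
    by (cases "null_weight (parent v) * w (parent v) v > 0") auto
qed

text \<open>The Dirichlet energy only sees vertices of positive null weight; adding the mean and the
  remaining vertices makes it positive definite.\<close>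
lemma augmented_dirichlet_energy_pos:
  fixes y :: "('a::real_normed_vector)^'k"
  assumes "y \<noteq> 0"
  shows "dirichlet_energy y + (norm (\<Sum>i\<in>UNIV. null_weight i *\<^sub>R y$i))\<^sup>2
           + (\<Sum>i | null_weight i = 0. (norm (y$i))\<^sup>2) > 0"
proof (rule ccontr)
  assume "\<not> ?thesis"
  moreover have "(\<Sum>i | null_weight i = 0. (norm (y$i))\<^sup>2) \<ge> 0" by (simp add: sum_nonneg)
  ultimately have zero: "dirichlet_energy y = 0" "(\<Sum>i\<in>UNIV. null_weight i *\<^sub>R y$i) = 0"
      "(\<Sum>i | null_weight i = 0. (norm (y$i))\<^sup>2) = 0"
    using dirichlet_energy_nonneg[of y] zero_le_power2[of "norm (\<Sum>i\<in>UNIV. null_weight i *\<^sub>R y$i)"]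
    by (smt (verit) norm_eq_zero power_eq_0_iff)+
  have const: "null_weight i > 0 \<Longrightarrow> y$i = y$r" for i
    using dirichlet_energy_eq_0_imp_eq_root[OF zero(1)] .
  have "(\<Sum>i\<in>UNIV. null_weight i *\<^sub>R y$i) = (\<Sum>i\<in>UNIV. null_weight i) *\<^sub>R y$r"
    unfolding scaleR_sum_left using const null_weight_nonneg
    by (intro sum.cong) (auto simp: order_le_less)
  moreover have "(\<Sum>i\<in>UNIV. null_weight i) \<ge> null_weight r"
    by (rule member_le_sum) (auto simp: null_weight_nonneg)
  ultimately have "y$r = 0" using zero(2) node_weight_root by auto
  moreover have "y$i = 0" if "null_weight i = 0" for i
    using zero(3) that by (subst (asm) sum_nonneg_eq_0_iff) auto
  ultimately have "y = 0"
    using const null_weight_nonneg by (auto simp: vec_eq_iff order_le_less)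
  then show False using assms by simp
qed

lemma dirichlet_energy_lower_bound:
  obtains \<mu> where "\<mu> > 0"
    "\<And>y::('a::euclidean_space)^'k. (\<Sum>i\<in>UNIV. null_weight i *\<^sub>R y$i) = 0 \<Longrightarrow>
       \<mu> * (norm (y$r))\<^sup>2 \<le> dirichlet_energy y"
proof -
  define q :: "'a^'k \<Rightarrow> real" where
    "q y = dirichlet_energy y + (norm (\<Sum>i\<in>UNIV. null_weight i *\<^sub>R y$i))\<^sup>2
           + (\<Sum>i | null_weight i = 0. (norm (y$i))\<^sup>2)" for y
  have q_cont: "continuous_on UNIV q"
    unfolding q_def dirichlet_energy_def by (intro continuous_intros)
  have q_hom: "q (s *\<^sub>R y) = s\<^sup>2 * q y" for s y
  proof -
    have "(\<Sum>i\<in>UNIV. null_weight i *\<^sub>R (s *\<^sub>R y)$i) = s *\<^sub>R (\<Sum>i\<in>UNIV. null_weight i *\<^sub>R y$i)"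
      by (simp add: scaleR_sum_right mult.commute)
    then show ?thesis
      unfolding q_def by (simp add: dirichlet_energy_scaleR power_mult_distrib sum_distrib_left algebra_simps)
  qed
  have q_pos: "y \<noteq> 0 \<Longrightarrow> q y > 0" for y
    unfolding q_def by (rule augmented_dirichlet_energy_pos)
  obtain \<mu> where \<mu>: "\<mu> > 0" "\<And>y. \<mu> * (norm y)\<^sup>2 \<le> q y"
    using quadratic_form_lower_bound[OF q_cont q_hom q_pos] by blast
  have "\<mu> * (norm (y$r))\<^sup>2 \<le> dirichlet_energy y"
    if mean: "(\<Sum>i\<in>UNIV. null_weight i *\<^sub>R y$i) = 0" for y :: "'a^'k"
  proof -
    text \<open>Discard the vertices of zero null weight: this changes neither the energy nor the mean.\<close>
    define y' where "y' = (\<chi> v. if null_weight v > 0 then y$v else 0)"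
    have "(\<Sum>i\<in>UNIV. null_weight i *\<^sub>R y'$i) = (\<Sum>i\<in>UNIV. null_weight i *\<^sub>R y$i)"
      unfolding y'_def using null_weight_nonneg by (intro sum.cong) (auto simp: order_le_less)
    moreover have "(\<Sum>i | null_weight i = 0. (norm (y'$i))\<^sup>2) = 0"
      unfolding y'_def by (intro sum.neutral) auto
    moreover have "dirichlet_energy y' = dirichlet_energy y"
      unfolding y'_def by (rule dirichlet_energy_restrict_null_weight_pos)
    ultimately have "q y' = dirichlet_energy y" unfolding q_def mean by simp
    moreover have "y'$r = y$r" unfolding y'_def using node_weight_root by simp
    moreover have "\<mu> * (norm (y'$r))\<^sup>2 \<le> \<mu> * (norm y')\<^sup>2"
      using \<mu>(1) Finite_Cartesian_Product.norm_nth_le[of y' r] by (simp add: power_mono)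
    ultimately show ?thesis using \<mu>(2)[of y'] by simp
  qed
  then show ?thesis using that \<mu>(1) by blast
qed

lemma geometric_depth_weights:
  fixes f :: "'k \<Rightarrow> real"
  assumes "\<mu> > 0" and f: "\<And>v. f v \<ge> 0"
  defines "d \<equiv> \<lambda>v. \<mu> * (1 / (2 * card (UNIV :: 'k set))) ^ depth v"
  shows "(\<Sum>v\<in>UNIV - {r}. d v * f (parent v)) \<le> (\<Sum>v\<in>UNIV. d v * f v) / 2"
proof -
  define \<theta> :: real where "\<theta> = 1 / (2 * card (UNIV :: 'k set))"
  define S where "S = (\<Sum>v\<in>UNIV. d v * f v)"
  have \<theta>: "\<theta> > 0" "\<theta> * card (UNIV :: 'k set) = 1 / 2" unfolding \<theta>_def by auto
  have S: "d u * f u \<le> S" for u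
    unfolding S_def d_def using assms by (intro member_le_sum mult_nonneg_nonneg) auto
  have "S \<ge> 0"
    unfolding S_def d_def using assms by (intro sum_nonneg mult_nonneg_nonneg) auto
  have "(\<Sum>v\<in>UNIV - {r}. d v * f (parent v)) = (\<Sum>v\<in>UNIV - {r}. \<theta> * (d (parent v) * f (parent v)))"
    unfolding d_def \<theta>_def by (intro sum.cong) (auto simp: depth_parent)
  also have "\<dots> \<le> (\<Sum>v\<in>UNIV - {r}. \<theta> * S)"
    using \<theta> S by (intro sum_mono mult_left_mono) auto
  also have "\<dots> = real (card (UNIV - {r} :: 'k set)) * (\<theta> * S)" by simp
  also have "\<dots> \<le> real (card (UNIV :: 'k set)) * (\<theta> * S)"
    using \<theta> \<open>S \<ge> 0\<close> by (intro mult_right_mono) (auto intro: card_mono)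
  also have "\<dots> = (\<theta> * card (UNIV :: 'k set)) * S" by (simp only: mult_ac)
  also have "\<dots> = S / 2" using \<theta>(2) by simp
  finally show ?thesis unfolding S_def .
qed

lemma weighted_laplacian_form_ge:
  fixes y :: "('a::real_inner)^'k"
  assumes d: "\<And>v. d v \<ge> 0"
  shows "dirichlet_energy y + (\<Sum>v\<in>UNIV - {r}. d v * (norm (y$v))\<^sup>2) / 2
           - (\<Sum>v\<in>UNIV - {r}. d v * (norm (y$parent v))\<^sup>2) / 2
         \<le> (\<Sum>i\<in>UNIV. node_weight d i * (y$i \<bullet> laplacian_apply (vec_nth y) i))"
proof -
  have edge: "null_weight (parent v) * w (parent v) v * (norm (y$v - y$parent v))\<^sup>2
          + d v / 2 * (norm (y$v))\<^sup>2 - d v / 2 * (norm (y$parent v))\<^sup>2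
        \<le> node_weight d (parent v) * w (parent v) v * (norm (y$v - y$parent v))\<^sup>2
          + d v * (y$v \<bullet> (y$v - y$parent v))"
    if "v \<in> UNIV - {r}" for v
  proof -
    have "null_weight (parent v) \<le> node_weight d (parent v)"
      using d by (intro node_weight_mono) auto
    then have "null_weight (parent v) * w (parent v) v * (norm (y$v - y$parent v))\<^sup>2
        \<le> node_weight d (parent v) * w (parent v) v * (norm (y$v - y$parent v))\<^sup>2"
      using that weight_from_parent_nonneg by (intro mult_right_mono) auto
    moreover have "d v * (((norm (y$v))\<^sup>2 - (norm (y$parent v))\<^sup>2) / 2) \<le> d v * (y$v \<bullet> (y$v - y$parent v))"
      using d[of v] inner_diff_lower_bound by (intro mult_left_mono) auto
    ultimately show ?thesis by (simp add: field_simps)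
  qed
  have "dirichlet_energy y + (\<Sum>v\<in>UNIV - {r}. d v * (norm (y$v))\<^sup>2) / 2
        - (\<Sum>v\<in>UNIV - {r}. d v * (norm (y$parent v))\<^sup>2) / 2
      = (\<Sum>v\<in>UNIV - {r}. null_weight (parent v) * w (parent v) v * (norm (y$v - y$parent v))\<^sup>2
          + d v / 2 * (norm (y$v))\<^sup>2 - d v / 2 * (norm (y$parent v))\<^sup>2)"
    unfolding dirichlet_energy_def by (simp add: sum.distrib sum_subtractf sum_divide_distrib)
  also have "\<dots> \<le> (\<Sum>i\<in>UNIV. node_weight d i * (y$i \<bullet> laplacian_apply (vec_nth y) i))"
    unfolding weighted_laplacian_form by (rule sum_mono) (rule edge)
  finally show ?thesis .
qed

text \<open>With d decaying geometrically in the depth, the slack terms d v <y_v, y_v - y_(parent v)>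
  telescope along the tree up to a root term, which the Dirichlet energy absorbs.\<close>
lemma weighted_laplacian_coercive:
  obtains d c where "\<And>v. d v > 0" "c > 0"
    "\<And>y::('a::euclidean_space)^'k. (\<Sum>i\<in>UNIV. null_weight i *\<^sub>R y$i) = 0 \<Longrightarrow>
       c * (norm y)\<^sup>2 \<le> (\<Sum>i\<in>UNIV. node_weight d i * (y$i \<bullet> laplacian_apply (vec_nth y) i))"
proof -
  obtain \<mu> where \<mu>: "\<mu> > 0" "\<And>y::'a^'k. (\<Sum>i\<in>UNIV. null_weight i *\<^sub>R y$i) = 0 \<Longrightarrow>
      \<mu> * (norm (y$r))\<^sup>2 \<le> dirichlet_energy y"
    using dirichlet_energy_lower_bound by blast
  define d where "d v = \<mu> * (1 / (2 * card (UNIV :: 'k set))) ^ depth v" for v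
  have d_pos: "d v > 0" for v unfolding d_def using \<mu>(1) by simp
  define m where "m = Min (range d)"
  have m: "m > 0" "m \<le> d v" for v
    unfolding m_def using d_pos by (auto intro: Min_le)
  have "m / 4 * (norm y)\<^sup>2 \<le> (\<Sum>i\<in>UNIV. node_weight d i * (y$i \<bullet> laplacian_apply (vec_nth y) i))"
    if mean: "(\<Sum>i\<in>UNIV. null_weight i *\<^sub>R y$i) = 0" for y :: "'a^'k"
  proof -
    define S where "S = (\<Sum>v\<in>UNIV. d v * (norm (y$v))\<^sup>2)"
    have form: "dirichlet_energy y + (\<Sum>v\<in>UNIV - {r}. d v * (norm (y$v))\<^sup>2) / 2
        - (\<Sum>v\<in>UNIV - {r}. d v * (norm (y$parent v))\<^sup>2) / 2
        \<le> (\<Sum>i\<in>UNIV. node_weight d i * (y$i \<bullet> laplacian_apply (vec_nth y) i))"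
      by (rule weighted_laplacian_form_ge) (use d_pos in \<open>auto intro: less_imp_le\<close>)
    have "(\<Sum>v\<in>UNIV - {r}. d v * (norm (y$v))\<^sup>2) = S - \<mu> * (norm (y$r))\<^sup>2"
      unfolding S_def d_def by (simp add: sum.remove[of UNIV r])
    moreover have "(\<Sum>v\<in>UNIV - {r}. d v * (norm (y$parent v))\<^sup>2) \<le> S / 2"
      using geometric_depth_weights[OF \<mu>(1), of "\<lambda>v. (norm (y$v))\<^sup>2"] unfolding S_def d_def by simp
    moreover have "\<mu> * (norm (y$r))\<^sup>2 \<le> dirichlet_energy y" by (rule \<mu>(2)[OF mean])
    ultimately have "S / 4 \<le> (\<Sum>i\<in>UNIV. node_weight d i * (y$i \<bullet> laplacian_apply (vec_nth y) i))"
      using form \<mu>(1) zero_le_power2[of "norm (y$r)"] mult_nonneg_nonneg[of \<mu> "(norm (y$r))\<^sup>2"]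
      by linarith
    moreover have "m * (norm y)\<^sup>2 \<le> S"
      unfolding S_def power2_norm_vec sum_distrib_left using m by (intro sum_mono mult_right_mono) auto
    ultimately show ?thesis by simp
  qed
  then show ?thesis using that[of d "m / 4"] d_pos m(1) by simp
qed

end

section \<open>Networks of passive port-Hamiltonian agents\<close>

lemma network_rhs_nth:
  "network_rhs L A M v $ i = A *v v$i - M *v (\<Sum>j\<in>UNIV. L i j *\<^sub>R v$j)"
proof -
  have "(\<Sum>j\<in>UNIV. (if i = j then 1 else 0) *\<^sub>R (A *v v$j)) = (\<Sum>j\<in>UNIV. if j = i then A *v v$j else 0)"
    by (rule sum.cong) auto
  also have "\<dots> = A *v v$i" by simp
  finally show ?thesis
    unfolding network_rhs_def kron_apply_def by (simp add: matrix_vector_mult_sum matrix_vector_mult_scaleR)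
qed

lemma linear_network_rhs: "linear (network_rhs L A M)"
  by (rule linearI) (simp_all add: vec_eq_iff network_rhs_nth algebra_simps sum.distrib
      scaleR_sum_right matrix_vector_mult_sum matrix_vector_mult_scaleR)

locale passive_tree_network = tree_network w T r for w :: "'k::finite \<Rightarrow> 'k \<Rightarrow> real" and T r +
  fixes Q J R A :: "real^'n^'n" and B :: "real^'m^'n" and C :: "real^'n^'m"
  assumes Q_pos_def: "pos_def Q" and J_skew: "skew_symmetric J" and R_pos_semidef: "pos_semidef R"
    and A_eq: "A = (J - R) ** Q" and C_eq: "C = transpose B ** Q"
    and observable: "observable C A"
begin

abbreviation network_map :: "real^'n^'k \<Rightarrow> real^'n^'k" where
  "network_map \<equiv> network_rhs (laplacian w) A (B ** C)"

lemma bounded_linear_network_map: "bounded_linear network_map"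
  using linear_network_rhs linear_linear by blast

lemma network_map_nth:
  "network_map v $ i = A *v v$i - (B ** C) *v laplacian_apply (vec_nth v) i"
  unfolding network_rhs_nth laplacian_apply_def ..

lemma linear_network_map_power: "linear (network_map ^^ k)"
proof (induction k)
  case (Suc k)
  then show ?case using linear_compose[OF Suc linear_network_rhs] by (simp add: o_def)
qed (simp add: linear_id[unfolded id_def])

lemma matrix_vector_mult_laplacian_apply:
  "(M::real^'a^'b) *v laplacian_apply u i = laplacian_apply (\<lambda>j. M *v u j) i"
  unfolding laplacian_apply_def by (simp add: matrix_vector_mult_sum matrix_vector_mult_scaleR)

lemma inner_Q_commute: "(Q *v u) \<bullet> v = u \<bullet> (Q *v v)"
proof -
  have "transpose Q = Q" using Q_pos_def unfolding pos_def_def symmetric_mat_def by blast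
  then show ?thesis by (metis dot_lmul_matrix transpose_matrix_vector)
qed

lemma inner_Q_A_nonpos: "u \<bullet> (Q *v (A *v u)) \<le> 0"
proof -
  define p where "p = Q *v u"
  have "u \<bullet> (Q *v (A *v u)) = p \<bullet> ((J - R) *v p)"
    unfolding p_def A_eq using inner_Q_commute[of u] by (simp add: matrix_vector_mul_assoc[symmetric])
  also have "\<dots> = p \<bullet> (J *v p) - p \<bullet> (R *v p)"
    by (simp add: matrix_vector_mult_diff_rdistrib inner_diff_right)
  also have "p \<bullet> (J *v p) = 0"
  proof -
    have "p \<bullet> (J *v p) = (transpose J *v p) \<bullet> p" by (rule inner_matrix_transpose)
    also have "transpose J *v p = - (J *v p)"
      using J_skew unfolding skew_symmetric_def by (simp add: vec_eq_iff matrix_vector_mult_def sum_negf)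
    finally show ?thesis by (simp add: inner_commute)
  qed
  also have "p \<bullet> (R *v p) \<ge> 0" using R_pos_semidef unfolding pos_semidef_def by blast
  finally show ?thesis by simp
qed

lemma inner_Q_BC: "u \<bullet> (Q *v ((B ** C) *v v)) = (C *v u) \<bullet> (C *v v)"
proof -
  have "u \<bullet> (Q *v ((B ** C) *v v)) = (Q *v u) \<bullet> (B *v (C *v v))"
    using inner_Q_commute[of u] by (simp add: matrix_vector_mul_assoc[symmetric])
  also have "\<dots> = (transpose B *v (Q *v u)) \<bullet> (C *v v)" by (rule inner_matrix_transpose)
  also have "transpose B *v (Q *v u) = C *v u" unfolding C_eq by (simp add: matrix_vector_mul_assoc)
  finally show ?thesis .
qed

lemma Q_lower_bound:
  obtains \<sigma> where "\<sigma> > 0" "\<And>v. \<sigma> * (norm v)\<^sup>2 \<le> v \<bullet> (Q *v v)"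
proof -
  have "continuous_on UNIV (\<lambda>v. v \<bullet> (Q *v v))"
    by (intro continuous_intros matrix_vector_mult_linear_continuous_on)
  moreover have "(s *\<^sub>R v) \<bullet> (Q *v (s *\<^sub>R v)) = s\<^sup>2 * (v \<bullet> (Q *v v))" for s v
    by (simp add: matrix_vector_mult_scaleR power2_eq_square)
  moreover have "v \<noteq> 0 \<Longrightarrow> v \<bullet> (Q *v v) > 0" for v
    using Q_pos_def unfolding pos_def_def by blast
  ultimately show thesis using quadratic_form_lower_bound that by blast
qed

definition weighted_mean :: "real^'n^'k \<Rightarrow> real^'n" where
  "weighted_mean v = (\<Sum>j\<in>UNIV. null_weight j *\<^sub>R v$j) /\<^sub>R (\<Sum>j\<in>UNIV. null_weight j)"

definition disagreement :: "real^'n^'k \<Rightarrow> real^'n^'k" where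
  "disagreement v = v - (\<chi> i. weighted_mean v)"

lemma sum_null_weight_pos: "(\<Sum>j\<in>UNIV. null_weight j) > 0"
proof -
  have "null_weight r \<le> (\<Sum>j\<in>UNIV. null_weight j)"
    by (rule member_le_sum) (auto simp: null_weight_nonneg)
  then show ?thesis using node_weight_root by simp
qed

lemma bounded_linear_disagreement: "bounded_linear disagreement"
proof -
  have "linear disagreement"
    unfolding disagreement_def weighted_mean_def
    by (rule linearI) (simp_all add: vec_eq_iff algebra_simps sum.distrib scaleR_sum_right)
  then show ?thesis using linear_linear by blast
qed

lemma disagreement_nth_diff: "disagreement v $ i - disagreement v $ j = v$i - v$j"
  by (simp add: disagreement_def)

lemma null_weight_sum_disagreement: "(\<Sum>i\<in>UNIV. null_weight i *\<^sub>R disagreement v $ i) = 0"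
proof -
  have "(\<Sum>i\<in>UNIV. null_weight i *\<^sub>R disagreement v $ i)
      = (\<Sum>i\<in>UNIV. null_weight i *\<^sub>R v$i) - (\<Sum>i\<in>UNIV. null_weight i) *\<^sub>R weighted_mean v"
    by (simp add: disagreement_def scaleR_diff_right sum_subtractf scaleR_sum_left)
  also have "(\<Sum>i\<in>UNIV. null_weight i) *\<^sub>R weighted_mean v = (\<Sum>i\<in>UNIV. null_weight i *\<^sub>R v$i)"
    using sum_null_weight_pos unfolding weighted_mean_def by simp
  finally show ?thesis by simp
qed

lemma disagreement_network_map: "disagreement (network_map v) = network_map (disagreement v)"
proof -
  have "(\<Sum>j\<in>UNIV. null_weight j *\<^sub>R network_map v $ j)
      = A *v (\<Sum>j\<in>UNIV. null_weight j *\<^sub>R v$j)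
        - (B ** C) *v (\<Sum>j\<in>UNIV. null_weight j *\<^sub>R laplacian_apply (vec_nth v) j)"
    by (simp add: network_map_nth matrix_vector_mult_sum matrix_vector_mult_scaleR scaleR_diff_right
        sum_subtractf)
  then have mean: "weighted_mean (network_map v) = A *v weighted_mean v"
    unfolding weighted_mean_def null_weight_laplacian by (simp add: matrix_vector_mult_scaleR)
  have const: "network_map (\<chi> i. m) = (\<chi> i. A *v m)" for m
    by (simp add: vec_eq_iff network_map_nth laplacian_apply_eq)
  show ?thesis
    unfolding disagreement_def linear_diff[OF linear_network_rhs] const mean ..
qed

definition network_output :: "real^'n^'k \<Rightarrow> real^'m^'k" where
  "network_output v = (\<chi> i. C *v v$i)"

definition observation :: "nat \<Rightarrow> real^'n^'k \<Rightarrow> real^'m^'k" where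
  "observation k v = network_output ((network_map ^^ k) v)"

lemma vec_nth_network_output: "vec_nth (network_output v) = (\<lambda>j. C *v v$j)"
  by (simp add: fun_eq_iff network_output_def)

lemma bounded_linear_network_output: "bounded_linear network_output"
proof -
  have "linear network_output"
    unfolding network_output_def
    by (rule linearI) (simp_all add: vec_eq_iff matrix_vector_right_distrib matrix_vector_mult_scaleR)
  then show ?thesis using linear_linear by blast
qed

lemma bounded_linear_observation: "bounded_linear (observation k)"
proof -
  have "bounded_linear (network_map ^^ k)"
    using linear_network_map_power linear_linear by blast
  then show ?thesis
    unfolding observation_def[abs_def] using bounded_linear_compose[OF bounded_linear_network_output] by blast
qed

lemma observation_network_map: "observation k (network_map v) = observation (Suc k) v"
  by (simp add: observation_def funpow_Suc_right del: funpow.simps)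

text \<open>If every observation of v vanishes, the coupling term vanishes along the iterates of v, so the
  network map acts agentwise as A and observability of (C, A) applies.\<close>
lemma observations_eq_0_imp:
  assumes "\<And>k. k < CARD('n) \<Longrightarrow> observation k v = 0"
  shows "v = 0"
proof -
  have powers: "(network_map ^^ k) v = (\<chi> i. mpow A k *v v$i)" if "k \<le> CARD('n)" for k
    using that
  proof (induction k)
    case (Suc k)
    define u where "u = (network_map ^^ k) v"
    have "C *v u$j = 0" for j
      using assms[of k] Suc.prems unfolding observation_def network_output_def u_def by (simp add: vec_eq_iff)
    then have "(B ** C) *v laplacian_apply (vec_nth u) i = 0" for i
      unfolding matrix_vector_mul_assoc[symmetric] matrix_vector_mult_laplacian_apply
      by (simp add: laplacian_apply_eq)
    then have "network_map u = (\<chi> i. A *v u$i)" by (simp add: vec_eq_iff network_map_nth)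
    moreover have "u = (\<chi> i. mpow A k *v v$i)" using Suc unfolding u_def by simp
    ultimately have "network_map u = (\<chi> i. mpow A (Suc k) *v v$i)"
      by (simp add: matrix_vector_mul_assoc)
    then show ?case unfolding u_def by simp
  qed (simp add: vec_eq_iff)
  have "v$i = 0" for i
  proof -
    have "(C ** mpow A k) *v v$i = 0" if "k < CARD('n)" for k
    proof -
      have "(C ** mpow A k) *v v$i = observation k v $ i"
        using powers[of k] that by (simp add: observation_def network_output_def matrix_vector_mul_assoc)
      then show ?thesis using assms[OF that] by simp
    qed
    with observable show ?thesis unfolding observable_def by blast
  qed
  then show ?thesis by (simp add: vec_eq_iff)
qed

lemma lyapunov_has_derivative:
  assumes "(z has_vector_derivative network_map (z t)) (at t)"
  shows "((\<lambda>t. \<Sum>i\<in>UNIV. g i * (z t $ i \<bullet> (Q *v z t $ i))) has_real_derivative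
           (\<Sum>i\<in>UNIV. g i * (2 * (z t $ i \<bullet> (Q *v network_map (z t) $ i))))) (at t)"
proof (intro DERIV_sum DERIV_cmult)
  fix i
  have zi: "((\<lambda>s. z s $ i) has_vector_derivative network_map (z t) $ i) (at t)"
    using bounded_linear.has_vector_derivative[OF bounded_linear_vec_nth assms] .
  have Qzi: "((\<lambda>s. Q *v z s $ i) has_vector_derivative Q *v network_map (z t) $ i) (at t)"
    using bounded_linear.has_vector_derivative[OF matrix_vector_mul_bounded_linear zi] .
  show "((\<lambda>s. z s $ i \<bullet> (Q *v z s $ i)) has_real_derivative 2 * (z t $ i \<bullet> (Q *v network_map (z t) $ i))) (at t)"
    using has_real_derivative_inner[OF zi Qzi] by (simp add: inner_Q_commute inner_commute)
qed

lemma lyapunov_decrease: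
  assumes coercive: "\<And>y::real^'m^'k. (\<Sum>i\<in>UNIV. null_weight i *\<^sub>R y$i) = 0 \<Longrightarrow>
      c * (norm y)\<^sup>2 \<le> (\<Sum>i\<in>UNIV. g i * (y$i \<bullet> laplacian_apply (vec_nth y) i))"
    and g: "\<And>i. g i > 0"
    and mean: "(\<Sum>i\<in>UNIV. null_weight i *\<^sub>R v$i) = 0"
  shows "(\<Sum>i\<in>UNIV. g i * (v$i \<bullet> (Q *v network_map v $ i))) \<le> - (c * (norm (network_output v))\<^sup>2)"
proof -
  define y where "y = network_output v"
  have "(\<Sum>i\<in>UNIV. null_weight i *\<^sub>R y$i) = C *v (\<Sum>i\<in>UNIV. null_weight i *\<^sub>R v$i)"
    by (simp add: y_def network_output_def matrix_vector_mult_sum matrix_vector_mult_scaleR)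
  then have coercive_y: "c * (norm y)\<^sup>2 \<le> (\<Sum>i\<in>UNIV. g i * (y$i \<bullet> laplacian_apply (vec_nth y) i))"
    using mean by (intro coercive) simp
  have "v$i \<bullet> (Q *v network_map v $ i)
      = v$i \<bullet> (Q *v (A *v v$i)) - y$i \<bullet> laplacian_apply (vec_nth y) i" for i
  proof -
    have "v$i \<bullet> (Q *v ((B ** C) *v laplacian_apply (vec_nth v) i))
        = (C *v v$i) \<bullet> (C *v laplacian_apply (vec_nth v) i)"
      by (rule inner_Q_BC)
    also have "\<dots> = y$i \<bullet> laplacian_apply (vec_nth y) i"
      unfolding matrix_vector_mult_laplacian_apply y_def vec_nth_network_output by (simp add: network_output_def)
    finally show ?thesis
      unfolding network_map_nth by (simp add: matrix_vector_mult_diff_distrib inner_diff_right)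
  qed
  then have "(\<Sum>i\<in>UNIV. g i * (v$i \<bullet> (Q *v network_map v $ i)))
      = (\<Sum>i\<in>UNIV. g i * (v$i \<bullet> (Q *v (A *v v$i))))
        - (\<Sum>i\<in>UNIV. g i * (y$i \<bullet> laplacian_apply (vec_nth y) i))"
    by (simp add: right_diff_distrib sum_subtractf)
  moreover have "(\<Sum>i\<in>UNIV. g i * (v$i \<bullet> (Q *v (A *v v$i)))) \<le> 0"
    using g inner_Q_A_nonpos by (intro sum_nonpos mult_nonneg_nonpos) (auto intro: less_imp_le)
  ultimately show ?thesis using coercive_y unfolding y_def by linarith
qed

lemma lyapunov_function:
  obtains V V' :: "real^'n^'k \<Rightarrow> real" and c \<kappa> :: real where "c > 0" "\<kappa> > 0"
    "\<And>v. \<kappa> * (norm v)\<^sup>2 \<le> V v"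
    "\<And>v. (\<Sum>i\<in>UNIV. null_weight i *\<^sub>R v$i) = 0 \<Longrightarrow> V' v \<le> - (c * (norm (network_output v))\<^sup>2)"
    "\<And>z t. (z has_vector_derivative network_map (z t)) (at t) \<Longrightarrow>
       ((\<lambda>t. V (z t)) has_real_derivative V' (z t)) (at t)"
proof -
  obtain d c where d: "\<And>v. d v > 0" and c: "c > 0" and coercive:
    "\<And>y::real^'m^'k. (\<Sum>i\<in>UNIV. null_weight i *\<^sub>R y$i) = 0 \<Longrightarrow>
       c * (norm y)\<^sup>2 \<le> (\<Sum>i\<in>UNIV. node_weight d i * (y$i \<bullet> laplacian_apply (vec_nth y) i))"
    using weighted_laplacian_coercive by blast
  define g where "g = node_weight d"
  have g: "g i > 0" for i unfolding g_def using d by (rule node_weight_pos)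
  obtain \<sigma> where \<sigma>: "\<sigma> > 0" "\<And>v. \<sigma> * (norm v)\<^sup>2 \<le> v \<bullet> (Q *v v)"
    using Q_lower_bound by blast
  define \<kappa> where "\<kappa> = \<sigma> * Min (range g)"
  define V where "V v = (\<Sum>i\<in>UNIV. g i * (v$i \<bullet> (Q *v v$i)))" for v
  define V' where "V' v = (\<Sum>i\<in>UNIV. g i * (2 * (v$i \<bullet> (Q *v network_map v $ i))))" for v
  have "\<kappa> > 0" unfolding \<kappa>_def using \<sigma> g by simp
  moreover have "\<kappa> * (norm v)\<^sup>2 \<le> V v" for v
  proof -
    have "\<kappa> * (norm v)\<^sup>2 = (\<Sum>i\<in>UNIV. Min (range g) * (\<sigma> * (norm (v$i))\<^sup>2))"
      unfolding \<kappa>_def by (simp add: power2_norm_vec sum_distrib_left algebra_simps)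
    also have "\<dots> \<le> V v" unfolding V_def
    proof (intro sum_mono mult_mono)
      show "Min (range g) \<le> g i" for i by (rule Min_le) auto
    qed (use \<sigma> g in \<open>auto intro: less_imp_le\<close>)
    finally show ?thesis .
  qed
  moreover have "V' v \<le> - (2 * c * (norm (network_output v))\<^sup>2)"
    if "(\<Sum>i\<in>UNIV. null_weight i *\<^sub>R v$i) = 0" for v
  proof -
    have "(\<Sum>i\<in>UNIV. g i * (v$i \<bullet> (Q *v network_map v $ i))) \<le> - (c * (norm (network_output v))\<^sup>2)"
      using coercive g that unfolding g_def by (rule lyapunov_decrease)
    moreover have "V' v = 2 * (\<Sum>i\<in>UNIV. g i * (v$i \<bullet> (Q *v network_map v $ i)))"
      unfolding V'_def by (simp add: sum_distrib_left mult.left_commute)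
    ultimately show ?thesis by linarith
  qed
  moreover have "((\<lambda>t. V (z t)) has_real_derivative V' (z t)) (at t)"
    if "(z has_vector_derivative network_map (z t)) (at t)" for z t
    unfolding V_def V'_def using that by (rule lyapunov_has_derivative)
  ultimately show thesis using c by (intro that[of "2 * c" \<kappa> V V']) auto
qed

lemma disagreement_tendsto_zero:
  fixes x :: "real \<Rightarrow> real^'n^'k"
  assumes ode: "\<forall>t\<ge>0. (x has_vector_derivative network_map (x t)) (at t within {0..})"
  shows "((\<lambda>t. disagreement (x t)) \<longlongrightarrow> 0) at_top"
proof -
  define z where "z t = disagreement (x t)" for t
  have flow: "(z has_vector_derivative network_map (z t)) (at t)" if "t \<ge> 1" for t
  proof -
    have "at t within {0..} = at t"
      by (rule at_within_open_subset[of _ "{0<..}"]) (use that in auto)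
    then have "(x has_vector_derivative network_map (x t)) (at t)"
      using ode[rule_format, of t] that by simp
    from bounded_linear.has_vector_derivative[OF bounded_linear_disagreement this]
    show ?thesis unfolding z_def disagreement_network_map .
  qed
  obtain V V' :: "real^'n^'k \<Rightarrow> real" and c \<kappa> :: real where c: "c > 0" and \<kappa>: "\<kappa> > 0"
    and lower: "\<And>v. \<kappa> * (norm v)\<^sup>2 \<le> V v"
    and decrease: "\<And>v. (\<Sum>i\<in>UNIV. null_weight i *\<^sub>R v$i) = 0 \<Longrightarrow> V' v \<le> - (c * (norm (network_output v))\<^sup>2)"
    and derivative: "\<And>z t. (z has_vector_derivative network_map (z t)) (at t) \<Longrightarrow>
       ((\<lambda>t. V (z t)) has_real_derivative V' (z t)) (at t)"
    by (rule lyapunov_function) (rule that)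
  have decrease_z: "V' (z t) \<le> - (c * (norm (network_output (z t)))\<^sup>2)" for t
    unfolding z_def by (rule decrease[OF null_weight_sum_disagreement])
  have V_nonneg: "V (z t) \<ge> 0" for t
    using lower[of "z t"] \<kappa> by (smt (verit) mult_nonneg_nonneg zero_le_power2)
  have bounded: "bounded (z ` {1..})"
  proof (rule lyapunov_bounded[where V = "\<lambda>t. V (z t)" and V' = "\<lambda>t. V' (z t)" and \<kappa> = \<kappa>])
    show "((\<lambda>t. V (z t)) has_real_derivative V' (z t)) (at t)" if "t \<ge> 1" for t
      using derivative[OF flow[OF that]] .
    show "V' (z t) \<le> 0" for t
      using decrease_z[of t] c by (smt (verit) mult_nonneg_nonneg zero_le_power2)
  qed (use lower \<kappa> in auto)
  have "((\<lambda>t. network_output (z t)) \<longlongrightarrow> 0) at_top"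
  proof (rule lyapunov_output_tendsto_zero[OF bounded_linear_network_map bounded_linear_network_output
        flow bounded])
    show "((\<lambda>t. V (z t)) has_real_derivative V' (z t)) (at t)" if "t \<ge> 1" for t
      using derivative[OF flow[OF that]] .
    show "V' (z t) \<le> - (c * (norm (network_output (z t)))\<^sup>2)" for t
      by (rule decrease_z)
  qed (use c V_nonneg in auto)
  then have observations: "((\<lambda>t. observation k (z t)) \<longlongrightarrow> 0) at_top" for k
  proof (induction k)
    case (Suc k)
    then show ?case
      using linear_flow_output_derivative_tendsto_zero[OF bounded_linear_network_map
          bounded_linear_observation flow bounded]
      by (simp add: observation_network_map)
  qed (simp add: observation_def)
  have "(z \<longlongrightarrow> 0) at_top"
    by (rule tendsto_zero_if_outputs_tendsto_zero[where Y = observation and n = "CARD('n)"])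
      (use bounded_linear_observation observations_eq_0_imp observations in auto)
  then show ?thesis unfolding z_def .
qed
end

theorem theorem1:
  fixes Q J R A :: "real^'n^'n"
    and B :: "real^'m^'n"
    and C :: "real^'n^'m"
    and w :: "'k::finite \<Rightarrow> 'k \<Rightarrow> real"
    and x :: "real \<Rightarrow> real^'n^'k"
  assumes "pos_def Q" and "skew_symmetric J" and "pos_semidef R"
    and "A = (J - R) ** Q" and "C = transpose B ** Q"
    and "controllable A B" and "observable C A"
    and "CARD('k) \<ge> 2"
    and "\<forall>i j. i \<noteq> j \<longrightarrow> w i j \<ge> 0"
    and "is_tree (uedge w)"
    and "has_rooted_spanning_tree w"
    and "\<forall>t\<ge>0. (x has_vector_derivative network_rhs (laplacian w) A (B ** C) (x t)) (at t within {0..})"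
  shows "\<forall>i j. ((\<lambda>t. x t $ i - x t $ j) \<longlongrightarrow> 0) at_top"
proof (intro allI)
  fix i j
  obtain T r where T: "\<forall>i j. T i j \<longrightarrow> arc w i j" "is_tree T" "\<forall>i. \<not> T i r"
    "\<forall>v. v \<noteq> r \<longrightarrow> (\<exists>!i. T i v)"
    using assms(11) unfolding has_rooted_spanning_tree_def by blast
  interpret passive_tree_network w T r Q J R A B C
    by unfold_locales (use assms T in auto)
  have "((\<lambda>t. disagreement (x t) $ i - disagreement (x t) $ j) \<longlongrightarrow> 0 $ i - 0 $ j) at_top"
    using disagreement_tendsto_zero[OF assms(12)] by (intro tendsto_diff tendsto_vec_nth)
  then show "((\<lambda>t. x t $ i - x t $ j) \<longlongrightarrow> 0) at_top"
    by (simp add: disagreement_nth_diff)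
qed

end
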